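(* Let $f$ be a positive, locally integrable real function on $[1,\infty)$ with $f(x)\ll x$ and $\int_1^x\frac{f(t)}{t}\,dt\asymp f(x)$. Let $\vartheta>0$ be such that there exist $x_0,M>0$ with \[ \frac{f(x)}{x^\vartheta}\le M\,\frac{f(y)}{y^\vartheta}\quad\text{for all } y>x\ge x_0. \] Let $c\ge1$ and let $\mathscr{A}$ be the random set associated with $f$ and $c$. Then for every $0<\delta<1$ there is a constant $K$, independent of $n$, such that for all sufficiently large $n$, \[ \mathbb{E}\big(r^{(\delta\text{-small})}_{\mathscr{A},h}(n)\big)\le K\,c^h\,n^{-(1-\delta)\vartheta}\,\frac{f(n)^h}{n}. \]
   Context: Fix an integer $h\ge 2$ and positive integers $b_1,\dots,b_h$, not necessarily distinct, with $\gcd(b_1,\dots,b_h)=1$. Random set: given a function $f:[1,\infty)\to\mathbb{R}_{>0}$ and a constant $c>0$, the random set $\mathscr{A}\subseteq\mathbb{Z}_{\ge0}$ associated with $f$ and $c$ is defined by: $0\in\mathscr{A}$ always, and the events $\{n\in\mathscr{A}\}$ for $n\ge1$ are mutually independent with $\Pr(n\in\mathscr{A})=\min\{cf(n)/n,\,1\}$. For $A\subseteq\mathbb{Z}_{\ge0}$ and $0<\delta<1$, $r^{(\delta\text{-small})}_{A,h}(n)$ is the number of $(k_1,\dots,k_h)\in A^h$ with $b_1k_1+\cdots+b_hk_h=n$ such that $k_j<n^\delta$ for at least one $j$. Asymptotic notation: $X\ll Y$ means $|X|\le CY$ for some constant $C>0$ and all sufficiently large values of the variable. $X\asymp Y$ means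 $X\ll Y$ and $Y\ll X$. *)

theory Defs
  imports "HOL-Probability.Probability" "HOL-Library.Landau_Symbols"
begin

definition r_small :: "(nat \<Rightarrow> nat) \<Rightarrow> nat \<Rightarrow> real \<Rightarrow> nat set \<Rightarrow> nat \<Rightarrow> nat" where
  "r_small b h \<delta> A n = card {k \<in> {..<h} \<rightarrow>\<^sub>E A.
      (\<Sum>j<h. b j * k j) = n \<and> (\<exists>j<h. real (k j) < real n powr \<delta>)}"

end

theory Submission
  imports Defs
begin

text \<open>The expectation of \<open>r_small\<close> is a sum, over the representations \<open>n = \<Sum> b\<^sub>j k\<^sub>j\<close> with
  some \<open>k\<^sub>j < n\<^sup>\<delta>\<close>, of the probability that all \<open>k\<^sub>j\<close> lie in the random set, i.e. of the product
  of \<open>q(v) = min (c f(v)/v) 1\<close> over the distinct nonzero values \<open>v\<close> of the tuple.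
  Fix the small coordinate \<open>j\<close> and its value \<open>v\<close>. If \<open>v\<close> occurs at another coordinate \<open>i\<close>, the
  two coordinates merge into one with coefficient \<open>b\<^sub>i + b\<^sub>j\<close>; otherwise \<open>q(v)\<close> factors off and
  what remains is a representation of \<open>n - b\<^sub>j v\<close> with one coordinate fewer. By induction on the
  number of coordinates, convolving with \<open>q\<close> at each step, the weight of the representations of
  \<open>m\<close> with \<open>h\<close> coordinates is \<open>O(c^h F(m)^h / m)\<close>. Here \<open>F\<close> is a nondecreasing majorant of \<open>f\<close>
  with \<open>F(m)/m^\<theta>\<close> nondecreasing, which the \<open>\<theta>\<close>-condition makes comparable with \<open>f\<close>, and which
  satisfies \<open>\<Sum>\<^bsub>u \<le> m\<^esub> F(u)^h/u = O(F(m)^h)\<close>. So each small \<open>v\<close> contributes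
  \<open>O(q(v) c^(h-1) F(n)^(h-1) / n)\<close>, and summing \<open>q(v)\<close> over \<open>v < n\<^sup>\<delta>\<close> costs
  \<open>O(c F(n\<^sup>\<delta>)) = O(c n^(-(1-\<delta>)\<theta>) F(n))\<close>.\<close>

section \<open>Weighted representations\<close>

text \<open>\<open>incl_prob q X\<close> is the probability that the finite set \<open>X\<close> lies in a random set containing
  \<open>0\<close> surely and every other \<open>x\<close> independently with probability \<open>q x\<close>.\<close>

definition incl_prob :: "(nat \<Rightarrow> real) \<Rightarrow> nat set \<Rightarrow> real" where
  "incl_prob q X = (\<Prod>x\<in>X - {0}. q x)"

definition reps :: "nat set \<Rightarrow> (nat \<Rightarrow> nat) \<Rightarrow> nat \<Rightarrow> (nat \<Rightarrow> nat) set" where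
  "reps I b m = {k \<in> I \<rightarrow>\<^sub>E UNIV. (\<Sum>i\<in>I. b i * k i) = m}"

definition rep_weight :: "(nat \<Rightarrow> real) \<Rightarrow> nat set \<Rightarrow> (nat \<Rightarrow> nat) \<Rightarrow> nat \<Rightarrow> real" where
  "rep_weight q I b m = (\<Sum>k\<in>reps I b m. incl_prob q (k ` I))"

definition rep_weight_at ::
    "(nat \<Rightarrow> real) \<Rightarrow> nat \<Rightarrow> nat \<Rightarrow> nat set \<Rightarrow> (nat \<Rightarrow> nat) \<Rightarrow> nat \<Rightarrow> real" where
  "rep_weight_at q j v I b m = (\<Sum>k\<in>{k \<in> reps I b m. k j = v}. incl_prob q (k ` I))"

lemma incl_prob_nonneg: "(\<And>x. 0 \<le> q x) \<Longrightarrow> 0 \<le> incl_prob q X"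
  unfolding incl_prob_def by (simp add: prod_nonneg)

lemma incl_prob_singleton: "incl_prob q {v} = (if v = 0 then 1 else q v)"
  unfolding incl_prob_def by auto

lemma incl_prob_insert:
  assumes "finite X" "v \<notin> X"
  shows "incl_prob q (insert v X) = incl_prob q {v} * incl_prob q X"
proof (cases "v = 0")
  case False
  then have "insert v X - {0} = insert v (X - {0})" by auto
  with assms False show ?thesis unfolding incl_prob_def by simp
qed (simp add: incl_prob_def insert_Diff_if)

lemma reps_term_le:
  assumes "finite I" "k \<in> reps I b m" "i \<in> I"
  shows "b i * k i \<le> m"
proof -
  have "b i * k i \<le> (\<Sum>i\<in>I. b i * k i)" using assms(1,3) by (intro member_le_sum) auto
  then show ?thesis using assms(2) unfolding reps_def by simp
qed

lemma reps_coord_le: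
  assumes "finite I" "k \<in> reps I b m" "i \<in> I" "0 < b i"
  shows "k i \<le> m"
proof -
  have "k i \<le> b i * k i" using assms(4) by simp
  then show ?thesis using reps_term_le[OF assms(1-3)] by linarith
qed

lemma finite_reps:
  assumes "finite I" "\<forall>i\<in>I. 0 < b i"
  shows "finite (reps I b m)"
proof (rule finite_subset)
  show "reps I b m \<subseteq> I \<rightarrow>\<^sub>E {..m}"
  proof
    fix k assume k: "k \<in> reps I b m"
    then have "\<forall>i\<in>I. k i \<le> m" using assms reps_coord_le by blast
    then show "k \<in> I \<rightarrow>\<^sub>E {..m}" using k unfolding reps_def by (auto simp: PiE_iff)
  qed
qed (use assms in \<open>auto intro: finite_PiE\<close>)

lemma rep_weight_empty: "rep_weight q {} b m = (if m = 0 then 1 else 0)"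
  unfolding rep_weight_def reps_def incl_prob_def by auto

lemma rep_weight_eq_sum_at:
  assumes "finite I" "j \<in> I" "\<forall>i\<in>I. 0 < b i"
  shows "rep_weight q I b m = (\<Sum>v\<le>m. rep_weight_at q j v I b m)"
proof -
  have fin: "finite (reps I b m)" using finite_reps assms(1,3) by blast
  have "(\<Sum>v\<le>m. rep_weight_at q j v I b m)
      = (\<Sum>v\<le>m. \<Sum>k\<in>reps I b m. if k j = v then incl_prob q (k ` I) else 0)"
    by (simp add: rep_weight_at_def sum.inter_filter[OF fin])
  also have "\<dots> = (\<Sum>k\<in>reps I b m. \<Sum>v\<le>m. if k j = v then incl_prob q (k ` I) else 0)"
    by (rule sum.swap)
  also have "\<dots> = (\<Sum>k\<in>reps I b m. incl_prob q (k ` I))"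
    using reps_coord_le[OF assms(1) _ assms(2)] assms(2,3) by (intro sum.cong) auto
  finally show ?thesis unfolding rep_weight_def by simp
qed

lemma inj_on_restrict_Diff:
  assumes "j \<in> I"
  shows "inj_on (\<lambda>k. restrict k (I - {j})) {k \<in> I \<rightarrow>\<^sub>E B. k j = v}"
proof (rule inj_onI, rule ext)
  fix k k' x
  assume k: "k \<in> {k \<in> I \<rightarrow>\<^sub>E B. k j = v}" and k': "k' \<in> {k \<in> I \<rightarrow>\<^sub>E B. k j = v}"
    and eq: "restrict k (I - {j}) = restrict k' (I - {j})"
  show "k x = k' x"
  proof (cases "x \<in> I - {j}")
    case True
    then show ?thesis using fun_cong[OF eq, of x] by simp
  qed (use k k' assms in \<open>auto simp: PiE_iff extensional_def\<close>)
qed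

lemma sum_fun_upd_merge:
  fixes b :: "'a \<Rightarrow> nat"
  assumes "finite I" "i \<in> I" "j \<in> I" "i \<noteq> j"
  shows "sum (b(j := b j + b i)) (I - {i}) = sum b I"
proof -
  have "sum (b(j := b j + b i)) (I - {i}) = b j + b i + sum b (I - {i} - {j})"
    using assms by (subst sum.remove[of _ j]) (auto intro!: sum.cong)
  also have "\<dots> = sum b I"
    using assms by (simp add: sum.remove[of I i] sum.remove[of "I - {i}" j])
  finally show ?thesis .
qed

lemma sum_incl_prob_drop_coord_le:
  assumes fin: "finite I" and j: "j \<in> I" and pos: "\<forall>i\<in>I. 0 < b i" and q: "\<And>x. 0 \<le> q x"
  shows "(\<Sum>k\<in>{k \<in> reps I b m. k j = v}. incl_prob q (k ` (I - {j})))
    \<le> (if b j * v \<le> m then rep_weight q (I - {j}) b (m - b j * v) else 0)"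
proof (cases "b j * v \<le> m")
  case False
  then have none: "{k \<in> reps I b m. k j = v} = {}" using reps_term_le[OF fin _ j] by fastforce
  show ?thesis using False by (simp only: none sum.empty if_False order_refl)
next
  case True
  define S where "S = {k \<in> reps I b m. k j = v}"
  define \<rho> where "\<rho> k = restrict k (I - {j})" for k :: "nat \<Rightarrow> nat"
  have inj: "inj_on \<rho> S"
    by (rule inj_on_subset[OF inj_on_restrict_Diff[OF j, of UNIV v, folded \<rho>_def]])
       (auto simp: S_def reps_def)
  have img: "\<rho> ` S \<subseteq> reps (I - {j}) b (m - b j * v)"
  proof
    fix x assume "x \<in> \<rho> ` S"
    then obtain k where k: "k \<in> S" and x: "x = \<rho> k" by auto
    have "(\<Sum>i\<in>I. b i * k i) = b j * k j + (\<Sum>i\<in>I - {j}. b i * k i)"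
      using fin j by (rule sum.remove)
    moreover have "(\<Sum>i\<in>I - {j}. b i * x i) = (\<Sum>i\<in>I - {j}. b i * k i)"
      unfolding x \<rho>_def by (intro sum.cong) auto
    ultimately show "x \<in> reps (I - {j}) b (m - b j * v)"
      using k unfolding x S_def reps_def \<rho>_def by auto
  qed
  have "(\<Sum>k\<in>S. incl_prob q (k ` (I - {j}))) = (\<Sum>k\<in>S. incl_prob q (\<rho> k ` (I - {j})))"
    by (intro sum.cong) (auto simp: \<rho>_def)
  also have "\<dots> = (\<Sum>x\<in>\<rho> ` S. incl_prob q (x ` (I - {j})))"
    by (rule sum.reindex[OF inj, symmetric, unfolded comp_def])
  also have "\<dots> \<le> rep_weight q (I - {j}) b (m - b j * v)"
    unfolding rep_weight_def
    by (rule sum_mono2[OF finite_reps img]) (use fin pos q in \<open>auto intro: incl_prob_nonneg\<close>)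
  finally show ?thesis using True unfolding S_def by (simp only: if_True)
qed

lemma sum_incl_prob_coincide_le:
  assumes fin: "finite I" and j: "j \<in> I" and i: "i \<in> I - {j}"
    and pos: "\<forall>i\<in>I. 0 < b i" and q: "\<And>x. 0 \<le> q x"
  shows "(\<Sum>k\<in>{k \<in> reps I b m. k j = v \<and> k i = v}. incl_prob q (k ` I))
    \<le> rep_weight_at q j v (I - {i}) (b(j := b j + b i)) m"
proof -
  define b' where "b' = b(j := b j + b i)"
  define S where "S = {k \<in> reps I b m. k j = v \<and> k i = v}"
  define \<rho> where "\<rho> k = restrict k (I - {i})" for k :: "nat \<Rightarrow> nat"
  have j': "j \<in> I - {i}" using i j by auto
  have inj: "inj_on \<rho> S"
    by (rule inj_on_subset[OF inj_on_restrict_Diff[of i I UNIV v, folded \<rho>_def]])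
       (use i in \<open>auto simp: S_def reps_def\<close>)
  have img: "\<rho> ` S \<subseteq> {k \<in> reps (I - {i}) b' m. k j = v}"
  proof
    fix x assume "x \<in> \<rho> ` S"
    then obtain k where k: "k \<in> S" and x: "x = \<rho> k" by auto
    have kv: "k i = v" "k j = v" using k unfolding S_def by auto
    have "(\<Sum>l\<in>I. b l * k l) = b i * k i + (b j * k j + (\<Sum>l\<in>I - {i} - {j}. b l * k l))"
      using fin i j' by (simp add: sum.remove[of I i] sum.remove[of "I - {i}" j])
    moreover have "(\<Sum>l\<in>I - {i}. b' l * x l) = b' j * x j + (\<Sum>l\<in>I - {i} - {j}. b l * k l)"
      using fin j' unfolding x \<rho>_def b'_def by (simp add: sum.remove[of "I - {i}" j])
    ultimately show "x \<in> {k \<in> reps (I - {i}) b' m. k j = v}"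
      using k kv j' unfolding S_def reps_def x \<rho>_def b'_def by (auto simp: algebra_simps)
  qed
  have "(\<Sum>k\<in>S. incl_prob q (k ` I)) = (\<Sum>k\<in>S. incl_prob q (\<rho> k ` (I - {i})))"
  proof (intro sum.cong refl arg_cong[where f = "incl_prob q"])
    fix k assume "k \<in> S"
    then have "k i \<in> k ` (I - {i})" using i j' unfolding S_def by (auto intro: image_eqI[of _ _ j])
    then have "k ` I = k ` (I - {i})" using i by blast
    then show "k ` I = \<rho> k ` (I - {i})" by (auto simp: \<rho>_def)
  qed
  also have "\<dots> = (\<Sum>x\<in>\<rho> ` S. incl_prob q (x ` (I - {i})))"
    by (rule sum.reindex[OF inj, symmetric, unfolded comp_def])
  also have "\<dots> \<le> rep_weight_at q j v (I - {i}) b' m"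
    unfolding rep_weight_at_def
    by (rule sum_mono2) (use fin pos q i img finite_reps[of "I - {i}" b' m] in
        \<open>auto intro: incl_prob_nonneg simp: b'_def\<close>)
  finally show ?thesis unfolding S_def b'_def .
qed

lemma incl_prob_image_le:
  assumes fin: "finite I" and j: "j \<in> I" "k j = v" and q: "\<And>x. 0 \<le> q x"
  shows "incl_prob q (k ` I)
    \<le> incl_prob q {v} * incl_prob q (k ` (I - {j})) + (\<Sum>i\<in>I - {j}. if k i = v then incl_prob q (k ` I) else 0)"
    (is "_ \<le> _ + ?coinc")
proof -
  have coinc: "0 \<le> ?coinc" by (intro sum_nonneg) (simp add: incl_prob_nonneg q)
  show ?thesis
  proof (cases "v \<in> k ` (I - {j})")
    case True
    then obtain i where i: "i \<in> I - {j}" "k i = v" by auto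
    have "incl_prob q (k ` I) = (if k i = v then incl_prob q (k ` I) else 0)" using i by simp
    also have "\<dots> \<le> ?coinc" using i fin incl_prob_nonneg[OF q] by (intro member_le_sum) auto
    finally have "incl_prob q (k ` I) \<le> ?coinc" .
    moreover have "0 \<le> incl_prob q {v} * incl_prob q (k ` (I - {j}))"
      using incl_prob_nonneg[OF q] by simp
    ultimately show ?thesis by linarith
  next
    case False
    have "k ` I = insert v (k ` (I - {j}))" using j by auto
    then have "incl_prob q (k ` I) = incl_prob q {v} * incl_prob q (k ` (I - {j}))"
      using incl_prob_insert[of "k ` (I - {j})" v q] fin False by simp
    then show ?thesis using coinc by linarith
  qed
qed

lemma rep_weight_at_le_merge:
  assumes fin: "finite I" and j: "j \<in> I" and pos: "\<forall>i\<in>I. 0 < b i" and q: "\<And>x. 0 \<le> q x"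
  shows "rep_weight_at q j v I b m
    \<le> incl_prob q {v} * (if b j * v \<le> m then rep_weight q (I - {j}) b (m - b j * v) else 0)
      + (\<Sum>i\<in>I - {j}. rep_weight_at q j v (I - {i}) (b(j := b j + b i)) m)"
proof -
  define S where "S = {k \<in> reps I b m. k j = v}"
  have finS: "finite S" unfolding S_def using finite_reps[OF fin pos] by simp
  have coinc: "(\<Sum>k\<in>S. if k i = v then incl_prob q (k ` I) else 0)
      = (\<Sum>k\<in>{k \<in> reps I b m. k j = v \<and> k i = v}. incl_prob q (k ` I))" for i
  proof -
    have "(\<Sum>k\<in>S. if k i = v then incl_prob q (k ` I) else 0) = (\<Sum>k\<in>{k \<in> S. k i = v}. incl_prob q (k ` I))"
      by (rule sum.inter_filter[OF finS, symmetric])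
    also have "{k \<in> S. k i = v} = {k \<in> reps I b m. k j = v \<and> k i = v}" unfolding S_def by auto
    finally show ?thesis .
  qed
  have "rep_weight_at q j v I b m = (\<Sum>k\<in>S. incl_prob q (k ` I))"
    unfolding rep_weight_at_def S_def ..
  also have "\<dots> \<le> (\<Sum>k\<in>S. incl_prob q {v} * incl_prob q (k ` (I - {j}))
      + (\<Sum>i\<in>I - {j}. if k i = v then incl_prob q (k ` I) else 0))"
    using fin j q by (intro sum_mono incl_prob_image_le) (auto simp: S_def)
  also have "\<dots> = incl_prob q {v} * (\<Sum>k\<in>S. incl_prob q (k ` (I - {j})))
      + (\<Sum>i\<in>I - {j}. \<Sum>k\<in>S. if k i = v then incl_prob q (k ` I) else 0)"
    unfolding sum.distrib sum_distrib_left by (rule arg_cong[where f = "(+) _"], rule sum.swap)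
  also have "\<dots> \<le> incl_prob q {v} * (if b j * v \<le> m then rep_weight q (I - {j}) b (m - b j * v) else 0)
      + (\<Sum>i\<in>I - {j}. rep_weight_at q j v (I - {i}) (b(j := b j + b i)) m)"
  proof (rule add_mono)
    show "incl_prob q {v} * (\<Sum>k\<in>S. incl_prob q (k ` (I - {j})))
        \<le> incl_prob q {v} * (if b j * v \<le> m then rep_weight q (I - {j}) b (m - b j * v) else 0)"
      using sum_incl_prob_drop_coord_le[OF fin j pos q] incl_prob_nonneg[OF q]
      unfolding S_def by (rule mult_left_mono)
    show "(\<Sum>i\<in>I - {j}. \<Sum>k\<in>S. if k i = v then incl_prob q (k ` I) else 0)
        \<le> (\<Sum>i\<in>I - {j}. rep_weight_at q j v (I - {i}) (b(j := b j + b i)) m)"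
      unfolding coinc by (intro sum_mono sum_incl_prob_coincide_le[OF fin j _ pos q])
  qed
  finally show ?thesis .
qed

section \<open>Convolution bounds\<close>

text \<open>In the application \<open>F\<close> is the regularisation of \<open>f\<close> defined below. The parameter \<open>W\<close>
  bounds the sum of the coefficients; this bound survives the merging of coordinates.\<close>

locale dominated_weights =
  fixes q :: "nat \<Rightarrow> real" and F :: "nat \<Rightarrow> real" and c :: real and W :: nat
  assumes c_ge_1: "1 \<le> c" and q_nonneg: "\<And>x. 0 \<le> q x"
    and F_mono: "\<And>u m. u \<le> m \<Longrightarrow> F u \<le> F m" and F_ge_1: "\<And>m. 1 \<le> F m"
    and q_le: "\<And>v. 1 \<le> v \<Longrightarrow> q v \<le> c * F v / real v"
    and sum_F_power_le: "\<And>h. 1 \<le> h \<Longrightarrow> \<exists>C. \<forall>m. (\<Sum>u\<le>m. F u ^ h / (real u + 1)) \<le> C * F m ^ h"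
begin

definition p :: "nat \<Rightarrow> real" where
  "p v = incl_prob q {v}"

text \<open>\<open>c\<^sup>h density h m\<close> is the size of the weight of the representations of \<open>m\<close> with \<open>h\<close>
  coordinates; for \<open>h = 0\<close> only the empty representation of \<open>0\<close> remains.\<close>

definition density :: "nat \<Rightarrow> nat \<Rightarrow> real" where
  "density h m = (if h = 0 then (if m = 0 then 1 else 0) else F m ^ h / (real m + 1))"

definition shifted_density :: "nat \<Rightarrow> nat \<Rightarrow> nat \<Rightarrow> real" where
  "shifted_density h v m = (\<Sum>w\<in>{1..W}. if w * v \<le> m then density h (m - w * v) else 0)"

definition admissible :: "nat set \<Rightarrow> (nat \<Rightarrow> nat) \<Rightarrow> bool" where
  "admissible I b \<longleftrightarrow> finite I \<and> (\<forall>i\<in>I. 0 < b i) \<and> sum b I \<le> W"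

lemma p_eq: "p v = (if v = 0 then 1 else q v)"
  unfolding p_def by (rule incl_prob_singleton)

lemma p_nonneg: "0 \<le> p v"
  using q_nonneg by (simp add: p_eq)

lemma density_Suc: "density (Suc h) m = F m ^ Suc h / (real m + 1)"
  by (simp add: density_def)

lemma density_nonneg: "0 \<le> density h m"
  using F_ge_1[of m] unfolding density_def by auto

lemma density_le_Suc: "density h m \<le> density (Suc h) m"
proof (cases "h = 0")
  case True
  then show ?thesis using F_ge_1[of 0] F_ge_1[of m] by (auto simp: density_def)
next
  case False
  have "F m ^ h \<le> F m ^ Suc h" using F_ge_1[of m] by (intro power_increasing) auto
  then show ?thesis using False by (auto simp: density_def divide_right_mono)
qed

lemma shifted_density_nonneg: "0 \<le> shifted_density h v m"
  unfolding shifted_density_def by (intro sum_nonneg) (auto intro: density_nonneg)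

lemma shifted_density_le_Suc: "shifted_density h v m \<le> shifted_density (Suc h) v m"
  unfolding shifted_density_def by (intro sum_mono) (auto intro: density_le_Suc)

lemma term_le_shifted_density:
  "w \<in> {1..W} \<Longrightarrow> (if w * v \<le> m then density h (m - w * v) else 0) \<le> shifted_density h v m"
  unfolding shifted_density_def
  by (rule member_le_sum[where f = "\<lambda>w. if w * v \<le> m then density h (m - w * v) else 0"])
     (auto intro: density_nonneg)

lemma p_le: "p v \<le> 2 * c * F v / (real v + 1)"
proof (cases "v = 0")
  case True
  have "1 * 1 \<le> c * F 0" using F_ge_1[of 0] c_ge_1 by (intro mult_mono) auto
  then show ?thesis using True by (simp add: p_eq)
next
  case False
  then have "p v \<le> c * F v / real v" using q_le by (simp add: p_eq)
  also have "\<dots> \<le> 2 * c * F v / (real v + 1)"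
    using False c_ge_1 F_ge_1[of v] by (simp add: field_simps)
  finally show ?thesis .
qed

lemma sum_p_le: "\<exists>C\<ge>0. \<forall>m. (\<Sum>v\<le>m. p v) \<le> C * c * F m"
proof -
  obtain C where C: "\<And>m. (\<Sum>u\<le>m. F u ^ 1 / (real u + 1)) \<le> C * F m ^ 1"
    using sum_F_power_le[of 1] by auto
  have "(\<Sum>v\<le>m. p v) \<le> (2 * max C 0) * c * F m" for m
  proof -
    have "(\<Sum>v\<le>m. p v) \<le> (\<Sum>v\<le>m. 2 * c * (F v ^ 1 / (real v + 1)))"
      by (intro sum_mono) (use p_le in auto)
    also have "\<dots> = 2 * c * (\<Sum>v\<le>m. F v ^ 1 / (real v + 1))" by (simp add: sum_distrib_left)
    also have "\<dots> \<le> 2 * c * (max C 0 * F m)"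
      using C[of m] c_ge_1 F_ge_1[of m] by (intro mult_left_mono) (auto intro: order_trans mult_right_mono)
    finally show ?thesis by (simp add: algebra_simps)
  qed
  then show ?thesis by (intro exI[of _ "2 * max C 0"]) auto
qed

lemma sum_density_le: "\<exists>C\<ge>0. \<forall>m. (\<Sum>u\<le>m. density h u) \<le> C * F m ^ h"
proof (cases "h = 0")
  case True
  then show ?thesis by (intro exI[of _ 1]) (simp add: density_def)
next
  case False
  then obtain C where C: "\<And>m. (\<Sum>u\<le>m. F u ^ h / (real u + 1)) \<le> C * F m ^ h"
    using sum_F_power_le[of h] by auto
  have "(\<Sum>u\<le>m. density h u) \<le> max C 0 * F m ^ h" for m
  proof -
    have "(\<Sum>u\<le>m. density h u) \<le> C * F m ^ h" using C[of m] False by (simp add: density_def)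
    also have "\<dots> \<le> max C 0 * F m ^ h" using F_ge_1[of m] by (intro mult_right_mono) auto
    finally show ?thesis .
  qed
  then show ?thesis by (intro exI[of _ "max C 0"]) auto
qed

lemma density_diff_le:
  assumes "2 * u \<le> m"
  shows "density h (m - u) \<le> 2 * F m ^ h / (real m + 1)"
proof (cases "h = 0")
  case True
  then show ?thesis using assms by (auto simp: density_def)
next
  case False
  have "F (m - u) ^ h \<le> F m ^ h"
    using F_ge_1[of "m - u"] F_mono[of "m - u" m] by (intro power_mono) auto
  moreover have "real m + 1 \<le> 2 * (real (m - u) + 1)" using assms by (simp add: of_nat_diff)
  ultimately have "F (m - u) ^ h / (real (m - u) + 1) \<le> F m ^ h / ((real m + 1) / 2)"
    using F_ge_1[of m] by (intro frac_le) auto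
  then show ?thesis using False by (simp add: density_def ac_simps)
qed

lemma p_le_of_large:
  assumes "v \<le> m" and "m + 1 \<le> 2 * W * v"
  shows "p v \<le> 2 * W * c * F m / (real m + 1)"
proof -
  have v: "1 \<le> v" and W: "0 < W" using assms(2) by (cases v; cases W; auto)+
  have "p v \<le> c * F v / real v" using q_le v by (simp add: p_eq)
  also have "\<dots> \<le> c * F m / real v"
    using F_mono[OF assms(1)] c_ge_1 by (intro divide_right_mono mult_left_mono) auto
  also have "\<dots> = 2 * W * c * F m / (2 * W * real v)" using W by simp
  also have "\<dots> \<le> 2 * W * c * F m / (real m + 1)"
    using assms(2) v W c_ge_1 F_ge_1[of m]
    by (intro divide_left_mono) (auto simp flip: of_nat_mult of_nat_add intro!: mult_pos_pos)
  finally show ?thesis .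
qed

text \<open>Either \<open>w v \<le> m/2\<close>, and then the density factor is \<open>O(F(m)^h/m)\<close>, or \<open>v\<close> is of size
  at least \<open>m/(2W)\<close>, and then \<open>p v = O(c F(m)/m)\<close>.\<close>

lemma p_mult_density_le:
  assumes "1 \<le> w" "w \<le> W"
  shows "p v * (if w * v \<le> m then density h (m - w * v) else 0)
    \<le> 2 * F m ^ h / (real m + 1) * p v + 2 * W * c * F m / (real m + 1) * (if w * v \<le> m then density h (m - w * v) else 0)"
    (is "p v * ?g \<le> ?A * p v + ?B * ?g")
proof -
  have "0 \<le> ?A" "0 \<le> ?B" using F_ge_1[of m] c_ge_1 by auto
  moreover have "0 \<le> ?g" using density_nonneg by simp
  moreover consider "\<not> w * v \<le> m" | "2 * (w * v) \<le> m" | "w * v \<le> m" "m + 1 \<le> 2 * W * v"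
  proof (cases "2 * (w * v) \<le> m")
    case False
    have "w * v \<le> W * v" using assms(2) by (rule mult_le_mono1)
    then have "m + 1 \<le> 2 * W * v" unfolding mult.assoc using False by linarith
    then show thesis using that(1,3) by blast
  qed (use that(2) in blast)
  then show ?thesis
  proof cases
    case 2
    then have "?g \<le> ?A" using density_diff_le[of "w * v" m h] by auto
    then have "p v * ?g \<le> ?A * p v"
      using mult_left_mono[OF _ p_nonneg[of v]] by (simp only: mult.commute[of _ "p v"])
    moreover have "0 \<le> ?B * ?g" using \<open>0 \<le> ?B\<close> \<open>0 \<le> ?g\<close> by (rule mult_nonneg_nonneg)
    ultimately show ?thesis by linarith
  next
    case 3
    have "v \<le> w * v" using assms(1) by simp
    then have "v \<le> m" using 3(1) by linarith
    then have "p v \<le> ?B" using p_le_of_large 3(2) by blast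
    then have "p v * ?g \<le> ?B * ?g" using \<open>0 \<le> ?g\<close> by (rule mult_right_mono)
    moreover have "0 \<le> ?A * p v" using \<open>0 \<le> ?A\<close> p_nonneg by (rule mult_nonneg_nonneg)
    ultimately show ?thesis by linarith
  qed (use mult_nonneg_nonneg[OF \<open>0 \<le> ?A\<close> p_nonneg[of v]] in simp)
qed

lemma sum_density_dilated_le:
  assumes "1 \<le> w"
  shows "(\<Sum>v\<le>m. if w * v \<le> m then density h (m - w * v) else 0) \<le> (\<Sum>u\<le>m. density h u)"
proof -
  have inj: "inj_on (\<lambda>v. m - w * v) {v \<in> {..m}. w * v \<le> m}"
  proof (rule inj_onI)
    fix x y assume "x \<in> {v \<in> {..m}. w * v \<le> m}" "y \<in> {v \<in> {..m}. w * v \<le> m}"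
      and "m - w * x = m - w * y"
    then have "w * x = w * y" by (metis diff_diff_cancel mem_Collect_eq)
    then show "x = y" using assms by simp
  qed
  have "(\<Sum>v\<le>m. if w * v \<le> m then density h (m - w * v) else 0)
      = (\<Sum>v\<in>{v \<in> {..m}. w * v \<le> m}. density h (m - w * v))"
    by (rule sum.inter_filter[symmetric]) simp
  also have "\<dots> = (\<Sum>u\<in>(\<lambda>v. m - w * v) ` {v \<in> {..m}. w * v \<le> m}. density h u)"
    by (rule sum.reindex[OF inj, symmetric, unfolded comp_def])
  also have "\<dots> \<le> (\<Sum>u\<le>m. density h u)"
    by (rule sum_mono2) (auto intro: density_nonneg)
  finally show ?thesis .
qed

lemma sum_p_shifted_density_le:
  "\<exists>C\<ge>0. \<forall>m. (\<Sum>v\<le>m. p v * shifted_density h v m) \<le> C * c * density (Suc h) m"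
proof -
  obtain Cp where Cp: "Cp \<ge> 0" "\<And>m. (\<Sum>v\<le>m. p v) \<le> Cp * c * F m" using sum_p_le by blast
  obtain Cd where Cd: "Cd \<ge> 0" "\<And>m. (\<Sum>u\<le>m. density h u) \<le> Cd * F m ^ h"
    using sum_density_le by blast
  define C where "C = 2 * Cp + 2 * W * Cd"
  have single: "(\<Sum>v\<le>m. p v * (if w * v \<le> m then density h (m - w * v) else 0))
      \<le> C * c * density (Suc h) m" if w: "w \<in> {1..W}" for w m
  proof -
    define A where "A = 2 * F m ^ h / (real m + 1)"
    define B where "B = 2 * W * c * F m / (real m + 1)"
    have "0 \<le> A" "0 \<le> B" unfolding A_def B_def using F_ge_1[of m] c_ge_1 by auto
    have "(\<Sum>v\<le>m. p v * (if w * v \<le> m then density h (m - w * v) else 0))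
        \<le> (\<Sum>v\<le>m. A * p v + B * (if w * v \<le> m then density h (m - w * v) else 0))"
      unfolding A_def B_def using w by (intro sum_mono p_mult_density_le) auto
    also have "\<dots> = A * (\<Sum>v\<le>m. p v) + B * (\<Sum>v\<le>m. if w * v \<le> m then density h (m - w * v) else 0)"
      by (simp add: sum.distrib sum_distrib_left)
    also have "\<dots> \<le> A * (Cp * c * F m) + B * (Cd * F m ^ h)"
      using \<open>0 \<le> A\<close> \<open>0 \<le> B\<close> Cp(2)[of m] Cd(2)[of m] sum_density_dilated_le[of w m h] w
      by (intro add_mono mult_left_mono) auto
    also have "\<dots> = (2 * F m ^ h * (Cp * c * F m) + 2 * W * c * F m * (Cd * F m ^ h)) / (real m + 1)"
      unfolding A_def B_def by (simp add: add_divide_distrib)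
    also have "\<dots> = C * c * F m ^ Suc h / (real m + 1)"
      unfolding C_def by (rule arg_cong[where f = "\<lambda>x. x / (real m + 1)"]) (simp add: algebra_simps)
    finally show ?thesis by (simp only: density_Suc times_divide_eq_right)
  qed
  have "(\<Sum>v\<le>m. p v * shifted_density h v m) \<le> W * C * c * density (Suc h) m" for m
  proof -
    have "(\<Sum>v\<le>m. p v * shifted_density h v m)
        = (\<Sum>w\<in>{1..W}. \<Sum>v\<le>m. p v * (if w * v \<le> m then density h (m - w * v) else 0))"
      unfolding shifted_density_def sum_distrib_left by (rule sum.swap)
    also have "\<dots> \<le> (\<Sum>w\<in>{1..W}. C * c * density (Suc h) m)"
      by (intro sum_mono single)
    finally show ?thesis by simp
  qed
  moreover have "0 \<le> W * C" using Cp Cd by (simp add: C_def)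
  ultimately show ?thesis by blast
qed

lemma admissible_Diff: "admissible I b \<Longrightarrow> admissible (I - {j}) b"
  unfolding admissible_def by (auto intro: order_trans[OF sum_mono2])

lemma admissible_merge:
  "admissible I b \<Longrightarrow> i \<in> I \<Longrightarrow> j \<in> I \<Longrightarrow> i \<noteq> j \<Longrightarrow> admissible (I - {i}) (b(j := b j + b i))"
  using sum_fun_upd_merge[of I i j b] unfolding admissible_def by auto

lemma admissible_coeff: "admissible I b \<Longrightarrow> j \<in> I \<Longrightarrow> b j \<in> {1..W}"
  unfolding admissible_def using member_le_sum[of j I b] by (auto simp: Suc_le_eq)

lemma shifted_term_le:
  assumes "b j \<in> {1..W}" "0 \<le> C" "\<And>m. rep_weight q I b m \<le> C * c ^ h * density h m"
  shows "(if b j * v \<le> m then rep_weight q I b (m - b j * v) else 0) \<le> C * c ^ h * shifted_density h v m"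
proof -
  have "(if b j * v \<le> m then rep_weight q I b (m - b j * v) else 0)
      \<le> C * c ^ h * (if b j * v \<le> m then density h (m - b j * v) else 0)"
    using assms(3) by simp
  also have "\<dots> \<le> C * c ^ h * shifted_density h v m"
    using assms(1,2) c_ge_1 by (intro mult_left_mono term_le_shifted_density) auto
  finally show ?thesis .
qed

lemma rep_weight_le_of_rep_weight_at_le:
  assumes "0 \<le> D" and at_le: "\<And>I b j v m. admissible I b \<Longrightarrow> card I = Suc h \<Longrightarrow> j \<in> I \<Longrightarrow>
      rep_weight_at q j v I b m \<le> D * p v * c ^ h * shifted_density h v m"
  shows "\<exists>C\<ge>0. \<forall>I b m. admissible I b \<longrightarrow> card I = Suc h \<longrightarrow>
      rep_weight q I b m \<le> C * c ^ Suc h * density (Suc h) m"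
proof -
  obtain C where C: "0 \<le> C" "\<And>m. (\<Sum>v\<le>m. p v * shifted_density h v m) \<le> C * c * density (Suc h) m"
    using sum_p_shifted_density_le by blast
  have "rep_weight q I b m \<le> D * C * c ^ Suc h * density (Suc h) m"
    if I: "admissible I b" "card I = Suc h" for I b m
  proof -
    obtain j where j: "j \<in> I" using I(2) by (metis card_eq_SucD insertI1)
    have "rep_weight q I b m = (\<Sum>v\<le>m. rep_weight_at q j v I b m)"
      using I(1) j by (intro rep_weight_eq_sum_at) (auto simp: admissible_def)
    also have "\<dots> \<le> (\<Sum>v\<le>m. D * c ^ h * (p v * shifted_density h v m))"
      using at_le[OF I j] by (intro sum_mono) (simp add: ac_simps)
    also have "\<dots> = D * c ^ h * (\<Sum>v\<le>m. p v * shifted_density h v m)"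
      by (simp add: sum_distrib_left)
    also have "\<dots> \<le> D * c ^ h * (C * c * density (Suc h) m)"
      using \<open>0 \<le> D\<close> c_ge_1 C(2) by (intro mult_left_mono) auto
    finally show ?thesis by (simp add: ac_simps)
  qed
  then show ?thesis using \<open>0 \<le> D\<close> C(1) by (intro exI[of _ "D * C"]) auto
qed

lemma rep_weight_at_singleton_le:
  assumes "admissible {j} b"
  shows "rep_weight_at q j v {j} b m \<le> p v * shifted_density 0 v m"
proof -
  have "rep_weight_at q j v {j} b m \<le> p v * (if b j * v \<le> m then rep_weight q {} b (m - b j * v) else 0)"
    using rep_weight_at_le_merge[of "{j}" j b q v m] assms q_nonneg
    unfolding admissible_def p_def by (simp only: Diff_cancel sum.empty add_0_right) auto
  also have "\<dots> \<le> p v * (1 * c ^ 0 * shifted_density 0 v m)"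
  proof (rule mult_left_mono[OF shifted_term_le p_nonneg])
    show "b j \<in> {1..W}" using admissible_coeff[OF assms] by simp
    show "rep_weight q {} b m' \<le> 1 * c ^ 0 * density 0 m'" for m'
      by (simp add: rep_weight_empty density_def)
  qed simp
  finally show ?thesis by simp
qed

lemma rep_weight_at_le_step:
  fixes C D :: real
  assumes "0 \<le> C" "0 \<le> D"
    and rep_weight_le: "\<And>I b m. admissible I b \<Longrightarrow> card I = Suc h \<Longrightarrow>
      rep_weight q I b m \<le> C * c ^ Suc h * density (Suc h) m"
    and rep_weight_at_le: "\<And>I b j v m. admissible I b \<Longrightarrow> card I = Suc h \<Longrightarrow> j \<in> I \<Longrightarrow>
      rep_weight_at q j v I b m \<le> D * p v * c ^ h * shifted_density h v m"
    and I: "admissible I b" "card I = Suc (Suc h)" "j \<in> I"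
  shows "rep_weight_at q j v I b m \<le> (C + Suc h * D) * p v * c ^ Suc h * shifted_density (Suc h) v m"
proof -
  have fin: "finite I" and card: "card (I - {j}) = Suc h" using I by (auto simp: admissible_def)
  have merged: "rep_weight_at q j v (I - {i}) (b(j := b j + b i)) m
      \<le> D * p v * c ^ Suc h * shifted_density (Suc h) v m" if i: "i \<in> I - {j}" for i
  proof -
    have "rep_weight_at q j v (I - {i}) (b(j := b j + b i)) m \<le> D * p v * c ^ h * shifted_density h v m"
      using i I fin by (intro rep_weight_at_le admissible_merge) auto
    also have "\<dots> \<le> D * p v * c ^ Suc h * shifted_density (Suc h) v m"
      using \<open>0 \<le> D\<close> p_nonneg[of v] c_ge_1 shifted_density_nonneg[of h v m] shifted_density_le_Suc[of h v m]
        power_increasing[of h "Suc h" c]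
      by (intro mult_mono mult_left_mono mult_nonneg_nonneg) auto
    finally show ?thesis .
  qed
  have "rep_weight_at q j v I b m
      \<le> p v * (if b j * v \<le> m then rep_weight q (I - {j}) b (m - b j * v) else 0)
        + (\<Sum>i\<in>I - {j}. rep_weight_at q j v (I - {i}) (b(j := b j + b i)) m)"
    unfolding p_def using I(1) by (intro rep_weight_at_le_merge fin I(3) q_nonneg) (simp add: admissible_def)
  also have "\<dots> \<le> p v * (C * c ^ Suc h * shifted_density (Suc h) v m)
        + (\<Sum>i\<in>I - {j}. D * p v * c ^ Suc h * shifted_density (Suc h) v m)"
  proof (rule add_mono[OF mult_left_mono[OF shifted_term_le p_nonneg] sum_mono[OF merged]])
    show "b j \<in> {1..W}" using admissible_coeff[OF I(1,3)] .
    show "rep_weight q (I - {j}) b m' \<le> C * c ^ Suc h * density (Suc h) m'" for m'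
      using rep_weight_le admissible_Diff[OF I(1)] card by blast
  qed (use \<open>0 \<le> C\<close> in auto)
  also have "\<dots> = (C + Suc h * D) * p v * c ^ Suc h * shifted_density (Suc h) v m"
    using card by (simp add: algebra_simps)
  finally show ?thesis .
qed

lemma rep_weight_at_le:
  "\<exists>D\<ge>0. \<forall>I b j v m. admissible I b \<longrightarrow> card I = Suc h \<longrightarrow> j \<in> I \<longrightarrow>
      rep_weight_at q j v I b m \<le> D * p v * c ^ h * shifted_density h v m"
proof (induction h)
  case 0
  have "rep_weight_at q j v I b m \<le> 1 * p v * c ^ 0 * shifted_density 0 v m"
    if I: "admissible I b" "card I = Suc 0" "j \<in> I" for I b j v m
  proof -
    obtain x where "I = {x}" using I(2) card_1_singletonE by (metis One_nat_def)
    then have "I = {j}" using I(3) by simp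
    then show ?thesis using rep_weight_at_singleton_le[of j b v m] I(1) by simp
  qed
  then show ?case by (intro exI[of _ 1]) auto
next
  case (Suc h)
  then obtain D where D: "0 \<le> D" "\<And>I b j v m. admissible I b \<Longrightarrow> card I = Suc h \<Longrightarrow> j \<in> I \<Longrightarrow>
      rep_weight_at q j v I b m \<le> D * p v * c ^ h * shifted_density h v m" by blast
  obtain C where C: "0 \<le> C" "\<And>I b m. admissible I b \<Longrightarrow> card I = Suc h \<Longrightarrow>
      rep_weight q I b m \<le> C * c ^ Suc h * density (Suc h) m"
    using rep_weight_le_of_rep_weight_at_le[OF D] by blast
  have "0 \<le> C + Suc h * D" using C(1) D(1) by simp
  with rep_weight_at_le_step[OF C(1) D(1) C(2) D(2)] show ?case by blast
qed

lemma shifted_density_small_le: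
  assumes "2 * W * v \<le> m"
  shows "shifted_density h v m \<le> W * (2 * F m ^ h / (real m + 1))"
proof -
  have "shifted_density h v m \<le> (\<Sum>w\<in>{1..W}. 2 * F m ^ h / (real m + 1))"
    unfolding shifted_density_def
  proof (rule sum_mono)
    fix w assume "w \<in> {1..W}"
    then have "w * v \<le> W * v" by (intro mult_le_mono1) simp
    then have "2 * (w * v) \<le> m" using assms unfolding mult.assoc by linarith
    then show "(if w * v \<le> m then density h (m - w * v) else 0) \<le> 2 * F m ^ h / (real m + 1)"
      using density_diff_le[of "w * v" m h] F_ge_1[of m] by simp
  qed
  then show ?thesis by simp
qed

lemma sum_rep_weight_at_small_le:
  assumes "1 \<le> h" and b: "\<forall>j<h. 0 < b j" "sum b {..<h} \<le> W"
  shows "\<exists>K\<ge>0. \<forall>n V. (\<forall>v\<in>V. 2 * W * v \<le> n) \<longrightarrow>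
    (\<Sum>j<h. \<Sum>v\<in>V. rep_weight_at q j v {..<h} b n) \<le> K * c ^ (h - 1) * F n ^ (h - 1) / (real n + 1) * (\<Sum>v\<in>V. p v)"
proof -
  obtain D where D: "0 \<le> D" "\<And>I b j v m. admissible I b \<Longrightarrow> card I = Suc (h - 1) \<Longrightarrow> j \<in> I \<Longrightarrow>
      rep_weight_at q j v I b m \<le> D * p v * c ^ (h - 1) * shifted_density (h - 1) v m"
    using rep_weight_at_le[of "h - 1"] by blast
  define K where "K = real h * D * W * 2"
  have "(\<Sum>j<h. \<Sum>v\<in>V. rep_weight_at q j v {..<h} b n) \<le> K * c ^ (h - 1) * F n ^ (h - 1) / (real n + 1) * (\<Sum>v\<in>V. p v)"
    if V: "\<forall>v\<in>V. 2 * W * v \<le> n" for n V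
  proof -
    have "rep_weight_at q j v {..<h} b n \<le> D * c ^ (h - 1) * (W * (2 * F n ^ (h - 1) / (real n + 1))) * p v"
      if "j < h" "v \<in> V" for j v
    proof -
      have "rep_weight_at q j v {..<h} b n \<le> D * p v * c ^ (h - 1) * shifted_density (h - 1) v n"
        using that assms by (intro D(2)) (auto simp: admissible_def)
      also have "\<dots> \<le> D * p v * c ^ (h - 1) * (W * (2 * F n ^ (h - 1) / (real n + 1)))"
        using D(1) p_nonneg[of v] c_ge_1 V that(2)
        by (intro mult_left_mono shifted_density_small_le mult_nonneg_nonneg) auto
      finally show ?thesis by (simp only: ac_simps)
    qed
    then have "(\<Sum>j<h. \<Sum>v\<in>V. rep_weight_at q j v {..<h} b n)
        \<le> (\<Sum>j<h. \<Sum>v\<in>V. D * c ^ (h - 1) * (W * (2 * F n ^ (h - 1) / (real n + 1))) * p v)"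
      by (intro sum_mono) auto
    also have "\<dots> = real h * (D * c ^ (h - 1) * (W * (2 * F n ^ (h - 1) / (real n + 1))) * (\<Sum>v\<in>V. p v))"
      by (simp add: sum_distrib_left)
    also have "\<dots> = K * c ^ (h - 1) * F n ^ (h - 1) / (real n + 1) * (\<Sum>v\<in>V. p v)"
      by (simp add: K_def)
    finally show ?thesis .
  qed
  moreover have "0 \<le> K" using D(1) by (simp add: K_def)
  ultimately show ?thesis by blast
qed

lemma sum_rep_weight_at_small_powr_le:
  assumes "1 \<le> h" and b: "\<forall>j<h. 0 < b j" "sum b {..<h} \<le> W"
  shows "\<exists>K\<ge>0. \<forall>n. 0 < n \<longrightarrow> 2 * W * real n powr \<delta> \<le> real n \<longrightarrow>
    (\<Sum>j<h. \<Sum>v\<in>{v. v \<le> n \<and> real v < real n powr \<delta>}. rep_weight_at q j v {..<h} b n)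
      \<le> K * c ^ h * F n ^ (h - 1) * F (nat \<lfloor>real n powr \<delta>\<rfloor>) / real n"
proof -
  obtain K where K: "0 \<le> K" "\<And>n V. \<forall>v\<in>V. 2 * W * v \<le> n \<Longrightarrow> (\<Sum>j<h. \<Sum>v\<in>V. rep_weight_at q j v {..<h} b n)
      \<le> K * c ^ (h - 1) * F n ^ (h - 1) / (real n + 1) * (\<Sum>v\<in>V. p v)"
    using sum_rep_weight_at_small_le[OF assms] by blast
  obtain Cp where Cp: "0 \<le> Cp" "\<And>m. (\<Sum>v\<le>m. p v) \<le> Cp * c * F m" using sum_p_le by blast
  have "(\<Sum>j<h. \<Sum>v\<in>{v. v \<le> n \<and> real v < real n powr \<delta>}. rep_weight_at q j v {..<h} b n)
      \<le> K * Cp * c ^ h * F n ^ (h - 1) * F (nat \<lfloor>real n powr \<delta>\<rfloor>) / real n"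
    if n: "0 < n" "2 * W * real n powr \<delta> \<le> real n" for n
  proof -
    define V where "V = {v. v \<le> n \<and> real v < real n powr \<delta>}"
    define N where "N = nat \<lfloor>real n powr \<delta>\<rfloor>"
    have "2 * W * v \<le> n" if "v \<in> V" for v
    proof -
      have "real v \<le> real n powr \<delta>" using that by (simp add: V_def)
      then have "real (2 * W * v) \<le> 2 * W * real n powr \<delta>" by (simp add: mult_left_mono)
      then show ?thesis using n(2) by linarith
    qed
    then have "(\<Sum>j<h. \<Sum>v\<in>V. rep_weight_at q j v {..<h} b n)
        \<le> K * c ^ (h - 1) * F n ^ (h - 1) / (real n + 1) * (\<Sum>v\<in>V. p v)"
      using K(2) by blast
    also have "\<dots> \<le> K * c ^ (h - 1) * F n ^ (h - 1) / (real n + 1) * (Cp * c * F N)"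
    proof (rule mult_left_mono)
      have "V \<subseteq> {..N}" by (auto simp: V_def N_def le_nat_iff le_floor_iff)
      then have "(\<Sum>v\<in>V. p v) \<le> (\<Sum>v\<le>N. p v)" by (intro sum_mono2) (auto intro: p_nonneg)
      then show "(\<Sum>v\<in>V. p v) \<le> Cp * c * F N" using Cp(2)[of N] by linarith
    qed (use K(1) c_ge_1 F_ge_1[of n] in simp)
    also have "K * c ^ (h - 1) * F n ^ (h - 1) / (real n + 1) * (Cp * c * F N)
        \<le> K * c ^ (h - 1) * F n ^ (h - 1) / real n * (Cp * c * F N)"
      using K(1) Cp(1) c_ge_1 F_ge_1[of n] F_ge_1[of N] n(1)
      by (intro mult_right_mono divide_left_mono) auto
    also have "\<dots> = K * Cp * c ^ h * F n ^ (h - 1) * F N / real n"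
      using assms(1) by (simp add: power_eq_if[of c h])
    finally show ?thesis unfolding V_def N_def .
  qed
  then show ?thesis using K(1) Cp(1) by (intro exI[of _ "K * Cp"]) auto
qed

end

section \<open>Regularisation of \<open>f\<close>\<close>

lemma powr_diff_ge:
  fixes s x :: real
  assumes s: "0 < s" "s < 1" and x: "0 \<le> x"
  shows "s * (x + 1) powr (s - 1) \<le> (x + 1) powr s - x powr s"
proof (cases "x = 0")
  case False
  then have "x > 0" using x by simp
  then have "\<exists>z. x < z \<and> z < x + 1 \<and> (x + 1) powr s - x powr s = (x + 1 - x) * (s * z powr (s - 1))"
    by (intro MVT2) (auto intro!: has_real_derivative_powr)
  then obtain z where z: "x < z" "z < x + 1" "(x + 1) powr s - x powr s = s * z powr (s - 1)"
    by auto
  have "(x + 1) powr (s - 1) \<le> z powr (s - 1)"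
    using z \<open>x > 0\<close> s by (intro powr_mono2') auto
  then show ?thesis using z s by simp
qed (use s in simp)

lemma sum_powr_le:
  fixes s :: real
  assumes "0 < s"
  shows "\<exists>C. \<forall>m::nat. (\<Sum>u\<le>m. (real u + 1) powr (s - 1)) \<le> C * (real m + 1) powr s"
proof (cases "1 \<le> s")
  case True
  have "(\<Sum>u\<le>m. (real u + 1) powr (s - 1)) \<le> 1 * (real m + 1) powr s" for m
  proof -
    have "(\<Sum>u\<le>m. (real u + 1) powr (s - 1)) \<le> (\<Sum>u\<le>m. (real m + 1) powr (s - 1))"
      using True by (intro sum_mono powr_mono2) auto
    also have "\<dots> = (real m + 1) * (real m + 1) powr (s - 1)" by simp
    also have "\<dots> = (real m + 1) powr s" by (simp add: powr_diff)
    finally show ?thesis by simp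
  qed
  then show ?thesis by blast
next
  case False
  have "(\<Sum>u\<le>m. (real u + 1) powr (s - 1)) \<le> 1 / s * (real m + 1) powr s" for m
  proof -
    have "(\<Sum>u\<le>m. (real u + 1) powr (s - 1)) \<le> (\<Sum>u<Suc m. 1 / s * (real (Suc u) powr s - real u powr s))"
      unfolding lessThan_Suc_atMost
    proof (rule sum_mono)
      fix u :: nat
      have "s * (real u + 1) powr (s - 1) \<le> (real u + 1) powr s - real u powr s"
        using powr_diff_ge[of s "real u"] assms False by auto
      then show "(real u + 1) powr (s - 1) \<le> 1 / s * (real (Suc u) powr s - real u powr s)"
        using assms by (simp add: field_simps add.commute)
    qed
    also have "\<dots> = 1 / s * (\<Sum>u<Suc m. real (Suc u) powr s - real u powr s)"
      by (rule sum_distrib_left[symmetric])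
    also have "(\<Sum>u<Suc m. real (Suc u) powr s - real u powr s) = (real m + 1) powr s"
      by (subst sum_lessThan_telescope[where f = "\<lambda>u. real u powr s"]) (simp add: add.commute)
    finally show ?thesis .
  qed
  then show ?thesis by blast
qed

text \<open>\<open>regularize f \<theta>\<close> is a nondecreasing majorant of \<open>f\<close> on the positive integers whose quotient
  by \<open>(m + 1)\<^sup>\<theta>\<close> is nondecreasing; the value \<open>1\<close> of \<open>reg_ratio\<close> at \<open>0\<close> makes it at least \<open>1\<close>.\<close>

definition reg_ratio :: "(real \<Rightarrow> real) \<Rightarrow> real \<Rightarrow> nat \<Rightarrow> real" where
  "reg_ratio f \<theta> u = (if u = 0 then 1 else f (real u) / (real u + 1) powr \<theta>)"

definition reg_max :: "(real \<Rightarrow> real) \<Rightarrow> real \<Rightarrow> nat \<Rightarrow> real" where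
  "reg_max f \<theta> m = Max (reg_ratio f \<theta> ` {..m})"

definition regularize :: "(real \<Rightarrow> real) \<Rightarrow> real \<Rightarrow> nat \<Rightarrow> real" where
  "regularize f \<theta> m = (real m + 1) powr \<theta> * reg_max f \<theta> m"

lemma reg_ratio_le_reg_max: "u \<le> m \<Longrightarrow> reg_ratio f \<theta> u \<le> reg_max f \<theta> m"
  unfolding reg_max_def by (rule Max_ge) auto

lemma one_le_reg_max: "1 \<le> reg_max f \<theta> m"
  using reg_ratio_le_reg_max[of 0 m f \<theta>] by (simp add: reg_ratio_def)

lemma reg_max_mono: "u \<le> m \<Longrightarrow> reg_max f \<theta> u \<le> reg_max f \<theta> m"
  unfolding reg_max_def by (rule Max_mono) auto

lemma regularize_mono: "0 \<le> \<theta> \<Longrightarrow> u \<le> m \<Longrightarrow> regularize f \<theta> u \<le> regularize f \<theta> m"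
  unfolding regularize_def using reg_max_mono[of u m f \<theta>] one_le_reg_max[of f \<theta> u]
  by (intro mult_mono powr_mono2) auto

lemma one_le_regularize: "0 \<le> \<theta> \<Longrightarrow> 1 \<le> regularize f \<theta> m"
  unfolding regularize_def using one_le_reg_max[of f \<theta> m] ge_one_powr_ge_zero[of "real m + 1" \<theta>]
    mult_mono[of 1 "(real m + 1) powr \<theta>" 1 "reg_max f \<theta> m"]
  by simp

lemma le_regularize: "1 \<le> v \<Longrightarrow> f (real v) \<le> regularize f \<theta> v"
  using mult_left_mono[OF reg_ratio_le_reg_max[of v v f \<theta>], of "(real v + 1) powr \<theta>"]
  by (simp add: regularize_def reg_ratio_def)

lemma sum_regularize_power_le:
  assumes "0 < \<theta>" "1 \<le> h"
  shows "\<exists>C. \<forall>m. (\<Sum>u\<le>m. regularize f \<theta> u ^ h / (real u + 1)) \<le> C * regularize f \<theta> m ^ h"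
proof -
  obtain C where C: "\<And>m::nat. (\<Sum>u\<le>m. (real u + 1) powr (h * \<theta> - 1)) \<le> C * (real m + 1) powr (h * \<theta>)"
    using sum_powr_le[of "h * \<theta>"] assms by auto
  have "(\<Sum>u\<le>m. regularize f \<theta> u ^ h / (real u + 1)) \<le> C * regularize f \<theta> m ^ h" for m
  proof -
    have "(\<Sum>u\<le>m. regularize f \<theta> u ^ h / (real u + 1))
        \<le> (\<Sum>u\<le>m. reg_max f \<theta> m ^ h * (real u + 1) powr (h * \<theta> - 1))"
    proof (rule sum_mono)
      fix u assume "u \<in> {..m}"
      then have "reg_max f \<theta> u ^ h \<le> reg_max f \<theta> m ^ h"
        using reg_max_mono[of u m f \<theta>] one_le_reg_max[of f \<theta> u] by (intro power_mono) auto
      then show "regularize f \<theta> u ^ h / (real u + 1) \<le> reg_max f \<theta> m ^ h * (real u + 1) powr (h * \<theta> - 1)"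
        by (simp add: regularize_def power_mult_distrib powr_power powr_diff divide_right_mono
            mult_left_mono mult.commute)
    qed
    also have "\<dots> \<le> reg_max f \<theta> m ^ h * (C * (real m + 1) powr (h * \<theta>))"
      using C one_le_reg_max[of f \<theta> m] by (simp add: sum_distrib_left[symmetric])
    also have "\<dots> = C * regularize f \<theta> m ^ h"
      by (simp add: regularize_def power_mult_distrib powr_power)
    finally show ?thesis .
  qed
  then show ?thesis by blast
qed

lemma regularize_le_scaled:
  assumes "0 \<le> \<theta>" "1 \<le> x" "real N \<le> x" "N \<le> n" "0 < n"
  shows "regularize f \<theta> N \<le> (2 * x / real n) powr \<theta> * regularize f \<theta> n"
proof -
  have "regularize f \<theta> N \<le> (2 * x) powr \<theta> * reg_max f \<theta> n"
    unfolding regularize_def using assms reg_max_mono[OF assms(4), of f \<theta>] one_le_reg_max[of f \<theta> N]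
    by (intro mult_mono powr_mono2) auto
  also have "(2 * x) powr \<theta> = (2 * x / real n) powr \<theta> * real n powr \<theta>"
    using assms by (simp add: powr_divide)
  also have "\<dots> * reg_max f \<theta> n \<le> (2 * x / real n) powr \<theta> * regularize f \<theta> n"
    unfolding regularize_def using assms one_le_reg_max[of f \<theta> n]
    by (simp add: mult.assoc mult_left_mono mult_right_mono powr_mono2)
  finally show ?thesis .
qed

lemma regularize_floor_powr_le:
  assumes "0 \<le> \<theta>" "0 < \<delta>" "\<delta> < 1" "1 \<le> n"
  shows "regularize f \<theta> (nat \<lfloor>real n powr \<delta>\<rfloor>)
    \<le> 2 powr \<theta> * real n powr (- (1 - \<delta>) * \<theta>) * regularize f \<theta> n"
proof -
  have "1 \<le> real n powr \<delta>" using assms by (intro ge_one_powr_ge_zero) auto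
  moreover have "real n powr \<delta> \<le> real n powr 1" using assms by (intro powr_mono) auto
  ultimately have "regularize f \<theta> (nat \<lfloor>real n powr \<delta>\<rfloor>) \<le> (2 * real n powr \<delta> / real n) powr \<theta> * regularize f \<theta> n"
    using assms by (intro regularize_le_scaled) (auto simp: nat_le_iff floor_le_iff)
  also have "(2 * real n powr \<delta> / real n) powr \<theta> = 2 powr \<theta> * real n powr (- (1 - \<delta>) * \<theta>)"
    using assms by (simp add: powr_mult powr_divide powr_powr powr_diff algebra_simps)
  finally show ?thesis .
qed

lemma reg_ratio_quasi_mono:
  assumes "0 < \<theta>" and f_pos: "\<forall>x\<ge>1. f x > 0"
    and "\<exists>x0>0. \<exists>K0>0. \<forall>x y. 1 \<le> x \<longrightarrow> x0 \<le> x \<longrightarrow> x < y \<longrightarrow>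
           f x / x powr \<theta> \<le> K0 * (f y / y powr \<theta>)"
  obtains x1 K where "1 \<le> x1" "0 < K" "\<And>u n. x1 \<le> u \<Longrightarrow> u < n \<Longrightarrow> reg_ratio f \<theta> u \<le> K * reg_ratio f \<theta> n"
proof -
  obtain x0 K0 where "0 < K0" and cond: "\<And>x y. 1 \<le> x \<Longrightarrow> x0 \<le> x \<Longrightarrow> x < y \<Longrightarrow>
      f x / x powr \<theta> \<le> K0 * (f y / y powr \<theta>)"
    using assms(3) by blast
  define x1 where "x1 = nat \<lceil>max x0 1\<rceil>"
  have x1: "x0 \<le> real x1" "1 \<le> x1" unfolding x1_def by linarith+
  have "reg_ratio f \<theta> u \<le> K0 * 2 powr \<theta> * reg_ratio f \<theta> n" if u: "x1 \<le> u" "u < n" for u n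
  proof -
    have u1: "1 \<le> real u" and n1: "1 \<le> real n" using u x1 by linarith+
    have fu: "0 < f (real u)" and fn: "0 < f (real n)" using f_pos u1 n1 by auto
    have "(real n + 1) powr \<theta> \<le> (2 * real n) powr \<theta>" using n1 assms(1) by (intro powr_mono2) auto
    then have n_succ: "(real n + 1) powr \<theta> \<le> 2 powr \<theta> * real n powr \<theta>" by (simp add: powr_mult)
    have "reg_ratio f \<theta> u = f (real u) / (real u + 1) powr \<theta>" using u1 by (simp add: reg_ratio_def)
    also have "\<dots> \<le> f (real u) / real u powr \<theta>"
      using fu u1 assms(1) by (intro divide_left_mono powr_mono2) auto
    also have "\<dots> \<le> K0 * (f (real n) / real n powr \<theta>)"
      using u x1 u1 by (intro cond) auto
    also have "\<dots> \<le> K0 * (2 powr \<theta> * f (real n) / (real n + 1) powr \<theta>)"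
    proof (rule mult_left_mono)
      have "f (real n) / real n powr \<theta> = 2 powr \<theta> * f (real n) / (2 powr \<theta> * real n powr \<theta>)"
        by simp
      also have "\<dots> \<le> 2 powr \<theta> * f (real n) / (real n + 1) powr \<theta>"
        using fn n1 n_succ by (intro divide_left_mono) auto
      finally show "f (real n) / real n powr \<theta> \<le> 2 powr \<theta> * f (real n) / (real n + 1) powr \<theta>" .
    qed (use \<open>0 < K0\<close> in simp)
    also have "\<dots> = K0 * 2 powr \<theta> * reg_ratio f \<theta> n" using n1 by (simp add: reg_ratio_def)
    finally show ?thesis .
  qed
  with x1(2) \<open>0 < K0\<close> show thesis by (intro that[of x1 "K0 * 2 powr \<theta>"]) auto
qed

lemma reg_max_le_reg_ratio:
  assumes quasi_mono: "\<And>u n. x1 \<le> u \<Longrightarrow> u < n \<Longrightarrow> reg_ratio f \<theta> u \<le> K * reg_ratio f \<theta> n"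
    and "0 < K" "0 < reg_ratio f \<theta> x1" "x1 < n"
  shows "reg_max f \<theta> n \<le> max (reg_max f \<theta> x1 * K / reg_ratio f \<theta> x1) 1 * reg_ratio f \<theta> n"
    (is "_ \<le> ?C * _")
proof -
  have "reg_ratio f \<theta> x1 \<le> K * reg_ratio f \<theta> n" using quasi_mono assms(4) by simp
  then have "0 < K * reg_ratio f \<theta> n" using assms(3) by linarith
  then have pos: "0 < reg_ratio f \<theta> n" using assms(2) zero_less_mult_pos by blast
  have "K = reg_ratio f \<theta> x1 * K / reg_ratio f \<theta> x1" using assms(3) by simp
  also have "\<dots> \<le> reg_max f \<theta> x1 * K / reg_ratio f \<theta> x1"
    using reg_ratio_le_reg_max[of x1 x1 f \<theta>] assms(2,3)
    by (intro divide_right_mono mult_right_mono) auto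
  finally have K_le: "K \<le> reg_max f \<theta> x1 * K / reg_ratio f \<theta> x1" .
  show ?thesis unfolding reg_max_def[of f \<theta> n]
  proof (rule Max.boundedI)
    fix y assume "y \<in> reg_ratio f \<theta> ` {..n}"
    then obtain u where u: "u \<le> n" "y = reg_ratio f \<theta> u" by auto
    consider "u < x1" | "x1 \<le> u" "u < n" | "u = n" using u(1) by linarith
    then show "y \<le> ?C * reg_ratio f \<theta> n"
    proof cases
      case 1
      have "y \<le> reg_max f \<theta> x1" unfolding u(2) using 1 by (intro reg_ratio_le_reg_max) simp
      also have "\<dots> = reg_max f \<theta> x1 / reg_ratio f \<theta> x1 * reg_ratio f \<theta> x1" using assms(3) by simp
      also have "\<dots> \<le> reg_max f \<theta> x1 / reg_ratio f \<theta> x1 * (K * reg_ratio f \<theta> n)"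
        using \<open>reg_ratio f \<theta> x1 \<le> K * reg_ratio f \<theta> n\<close> assms(3) one_le_reg_max[of f \<theta> x1]
        by (intro mult_left_mono) auto
      also have "\<dots> = reg_max f \<theta> x1 * K / reg_ratio f \<theta> x1 * reg_ratio f \<theta> n" by simp
      also have "\<dots> \<le> ?C * reg_ratio f \<theta> n" using pos by (intro mult_right_mono) auto
      finally show ?thesis .
    next
      case 2
      then have "y \<le> K * reg_ratio f \<theta> n" using u quasi_mono by simp
      also have "\<dots> \<le> ?C * reg_ratio f \<theta> n" using pos K_le by (intro mult_right_mono) auto
      finally show ?thesis .
    next
      case 3
      then show ?thesis using u pos by (simp add: mult_le_cancel_right1)
    qed
  qed simp_all
qed

lemma regularize_le_const_mult:
  assumes "0 < \<theta>" and f_pos: "\<forall>x\<ge>1. f x > 0"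
    and "\<exists>x0>0. \<exists>K0>0. \<forall>x y. 1 \<le> x \<longrightarrow> x0 \<le> x \<longrightarrow> x < y \<longrightarrow>
           f x / x powr \<theta> \<le> K0 * (f y / y powr \<theta>)"
  shows "\<exists>C. \<forall>\<^sub>F n in sequentially. regularize f \<theta> n \<le> C * f (real n)"
proof -
  obtain x1 K where x1: "1 \<le> x1" "0 < K"
    and quasi_mono: "\<And>u n. x1 \<le> u \<Longrightarrow> u < n \<Longrightarrow> reg_ratio f \<theta> u \<le> K * reg_ratio f \<theta> n"
    using reg_ratio_quasi_mono[OF assms] by blast
  define C where "C = max (reg_max f \<theta> x1 * K / reg_ratio f \<theta> x1) 1"
  have "0 < reg_ratio f \<theta> x1" using f_pos x1(1) by (simp add: reg_ratio_def)
  have "regularize f \<theta> n \<le> C * f (real n)" if "x1 < n" for n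
  proof -
    have "regularize f \<theta> n \<le> (real n + 1) powr \<theta> * (C * reg_ratio f \<theta> n)"
      unfolding regularize_def C_def using that x1 \<open>0 < reg_ratio f \<theta> x1\<close>
      by (intro mult_left_mono reg_max_le_reg_ratio[OF quasi_mono]) auto
    also have "\<dots> = C * f (real n)" using that by (simp add: reg_ratio_def)
    finally show ?thesis .
  qed
  then show ?thesis unfolding eventually_sequentially by (meson Suc_le_lessD)
qed

lemma dominated_weights_regularize:
  assumes "0 < \<theta>" "1 \<le> c" "\<And>v. 0 \<le> q v" "\<And>v. 1 \<le> v \<Longrightarrow> q v \<le> c * f (real v) / real v"
  shows "dominated_weights q (regularize f \<theta>) c"
proof
  show "q v \<le> c * regularize f \<theta> v / real v" if "1 \<le> v" for v
    using assms(4)[OF that] le_regularize[OF that, of f \<theta>] assms(2)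
    by (smt (verit) divide_right_mono mult_left_mono of_nat_0_le_iff)
qed (use assms sum_regularize_power_le regularize_mono one_le_regularize in auto)

section \<open>The expected number of representations\<close>

lemma eventually_mult_powr_le:
  fixes \<delta> C :: real
  assumes "\<delta> < 1" "0 \<le> C"
  shows "\<forall>\<^sub>F n in sequentially. C * real n powr \<delta> \<le> real n"
proof -
  have "((\<lambda>n. real n powr (\<delta> - 1)) \<longlongrightarrow> 0) sequentially"
    using assms by (intro tendsto_neg_powr filterlim_real_sequentially) simp
  then have "\<forall>\<^sub>F n in sequentially. real n powr (\<delta> - 1) < 1 / (C + 1)"
    by (rule order_tendstoD) (use assms in simp)
  with eventually_gt_at_top[of 0] show ?thesis
  proof eventually_elim
    case (elim n)
    have "C * real n powr \<delta> = C * (real n powr (\<delta> - 1) * real n)"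
      using elim by (simp add: powr_diff)
    also have "\<dots> \<le> (C + 1) * (1 / (C + 1) * real n)"
      using elim assms by (intro mult_mono) auto
    finally show ?case using assms by simp
  qed
qed

definition small_reps :: "(nat \<Rightarrow> nat) \<Rightarrow> nat \<Rightarrow> real \<Rightarrow> nat \<Rightarrow> (nat \<Rightarrow> nat) set" where
  "small_reps b h \<delta> n =
    {k \<in> {..<h} \<rightarrow>\<^sub>E UNIV. (\<Sum>j<h. b j * k j) = n \<and> (\<exists>j<h. real (k j) < real n powr \<delta>)}"

lemma small_reps_subset_reps: "small_reps b h \<delta> n \<subseteq> reps {..<h} b n"
  unfolding small_reps_def reps_def by auto

lemma sum_small_reps_le:
  assumes b: "\<forall>j<h. 0 < b j" and q: "\<And>x. 0 \<le> q x"
  shows "(\<Sum>k\<in>small_reps b h \<delta> n. incl_prob q (k ` {..<h}))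
    \<le> (\<Sum>j<h. \<Sum>v\<in>{v. v \<le> n \<and> real v < real n powr \<delta>}. rep_weight_at q j v {..<h} b n)"
proof -
  define V where "V = {v. v \<le> n \<and> real v < real n powr \<delta>}"
  define g where "g k = (\<Sum>j<h. \<Sum>v\<in>V. if k j = v then incl_prob q (k ` {..<h}) else 0)" for k
  have finT: "finite (reps {..<h} b n)" using b by (intro finite_reps) auto
  have g_nonneg: "0 \<le> g k" for k
    unfolding g_def using incl_prob_nonneg[OF q] by (intro sum_nonneg) auto
  have le_g: "incl_prob q (k ` {..<h}) \<le> g k" if k: "k \<in> small_reps b h \<delta> n" for k
  proof -
    obtain j where j: "j < h" "real (k j) < real n powr \<delta>" using k unfolding small_reps_def by auto
    have "k j \<le> n" using reps_coord_le[OF _ subsetD[OF small_reps_subset_reps k]] j b by auto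
    then have kj: "k j \<in> V" unfolding V_def using j by simp
    have "incl_prob q (k ` {..<h}) = (\<Sum>v\<in>V. if k j = v then incl_prob q (k ` {..<h}) else 0)"
      using kj by (simp add: V_def)
    also have "\<dots> \<le> g k"
      unfolding g_def using j incl_prob_nonneg[OF q]
      by (intro member_le_sum[where f = "\<lambda>j. \<Sum>v\<in>V. if k j = v then incl_prob q (k ` {..<h}) else 0"])
         (auto intro: sum_nonneg)
    finally show ?thesis .
  qed
  have "(\<Sum>k\<in>small_reps b h \<delta> n. incl_prob q (k ` {..<h})) \<le> (\<Sum>k\<in>small_reps b h \<delta> n. g k)"
    by (intro sum_mono le_g)
  also have "\<dots> \<le> (\<Sum>k\<in>reps {..<h} b n. g k)"
    by (rule sum_mono2[OF finT small_reps_subset_reps g_nonneg])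
  also have "\<dots> = (\<Sum>j<h. \<Sum>v\<in>V. \<Sum>k\<in>reps {..<h} b n. if k j = v then incl_prob q (k ` {..<h}) else 0)"
    unfolding g_def by (simp add: sum.swap[of _ "reps {..<h} b n"])
  also have "\<dots> = (\<Sum>j<h. \<Sum>v\<in>V. rep_weight_at q j v {..<h} b n)"
    unfolding rep_weight_at_def by (simp add: sum.inter_filter[OF finT])
  finally show ?thesis unfolding V_def .
qed

lemma prob_subset_random_set:
  fixes M :: "'a measure" and A :: "'a \<Rightarrow> nat set"
  assumes M: "prob_space M"
    and A_zero: "\<forall>\<omega>\<in>space M. 0 \<in> A \<omega>"
    and A_indep: "prob_space.indep_events M (\<lambda>n. {\<omega> \<in> space M. n \<in> A \<omega>}) {1..}"
    and A_prob: "\<forall>n\<ge>1. measure M {\<omega> \<in> space M. n \<in> A \<omega>} = q n"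
    and X: "finite X"
  shows "{\<omega> \<in> space M. X \<subseteq> A \<omega>} \<in> sets M" and "measure M {\<omega> \<in> space M. X \<subseteq> A \<omega>} = incl_prob q X"
proof -
  interpret prob_space M by (rule M)
  define Y where "Y = X - {0}"
  have eq: "{\<omega> \<in> space M. X \<subseteq> A \<omega>} = {\<omega> \<in> space M. Y \<subseteq> A \<omega>}"
    unfolding Y_def using A_zero by blast
  have events: "(\<lambda>n. {\<omega> \<in> space M. n \<in> A \<omega>}) ` {1..} \<subseteq> events"
    and indep: "\<And>J. J \<subseteq> {1..} \<Longrightarrow> J \<noteq> {} \<Longrightarrow> finite J \<Longrightarrow>
       prob (\<Inter>j\<in>J. {\<omega> \<in> space M. j \<in> A \<omega>}) = (\<Prod>j\<in>J. prob {\<omega> \<in> space M. j \<in> A \<omega>})"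
    using A_indep unfolding indep_events_def by auto
  have Y: "Y \<subseteq> {1..}" "finite Y" unfolding Y_def using X by auto
  have "{\<omega> \<in> space M. Y \<subseteq> A \<omega>} \<in> sets M \<and> prob {\<omega> \<in> space M. Y \<subseteq> A \<omega>} = incl_prob q X"
  proof (cases "Y = {}")
    case True
    then show ?thesis by (simp add: incl_prob_def Y_def[symmetric] prob_space)
  next
    case False
    then have "{\<omega> \<in> space M. Y \<subseteq> A \<omega>} = (\<Inter>j\<in>Y. {\<omega> \<in> space M. j \<in> A \<omega>})" by auto
    moreover have "(\<Inter>j\<in>Y. {\<omega> \<in> space M. j \<in> A \<omega>}) \<in> sets M"
      using events Y False by (intro sets.finite_INT) auto
    moreover have "prob (\<Inter>j\<in>Y. {\<omega> \<in> space M. j \<in> A \<omega>}) = incl_prob q X"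
      using indep[OF Y(1) False Y(2)] A_prob Y(1)
      unfolding incl_prob_def Y_def[symmetric] by (auto intro!: prod.cong)
    ultimately show ?thesis by simp
  qed
  then show "{\<omega> \<in> space M. X \<subseteq> A \<omega>} \<in> sets M" "prob {\<omega> \<in> space M. X \<subseteq> A \<omega>} = incl_prob q X"
    using eq by simp_all
qed

lemma expectation_r_small:
  fixes M :: "'a measure" and A :: "'a \<Rightarrow> nat set"
  assumes M: "prob_space M"
    and A_zero: "\<forall>\<omega>\<in>space M. 0 \<in> A \<omega>"
    and A_indep: "prob_space.indep_events M (\<lambda>n. {\<omega> \<in> space M. n \<in> A \<omega>}) {1..}"
    and A_prob: "\<forall>n\<ge>1. measure M {\<omega> \<in> space M. n \<in> A \<omega>} = q n"
    and b: "\<forall>j<h. 0 < b j"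
  shows "prob_space.expectation M (\<lambda>\<omega>. real (r_small b h \<delta> (A \<omega>) n))
    = (\<Sum>k\<in>small_reps b h \<delta> n. incl_prob q (k ` {..<h}))"
proof -
  interpret prob_space M by (rule M)
  define S where "S = small_reps b h \<delta> n"
  define E where "E k = {\<omega> \<in> space M. k ` {..<h} \<subseteq> A \<omega>}" for k :: "nat \<Rightarrow> nat"
  have finS: "finite S"
    unfolding S_def using b by (intro finite_subset[OF small_reps_subset_reps finite_reps]) auto
  note E = prob_subset_random_set[OF M A_zero A_indep A_prob, of "k ` {..<h}" for k, folded E_def]
  have count: "real (r_small b h \<delta> (A \<omega>) n) = (\<Sum>k\<in>S. indicator (E k) \<omega>)" if "\<omega> \<in> space M" for \<omega>
  proof -
    have "{k \<in> {..<h} \<rightarrow>\<^sub>E A \<omega>. (\<Sum>j<h. b j * k j) = n \<and> (\<exists>j<h. real (k j) < real n powr \<delta>)}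
        = {k \<in> S. k ` {..<h} \<subseteq> A \<omega>}"
      unfolding S_def small_reps_def by (auto simp: PiE_iff)
    then have "real (r_small b h \<delta> (A \<omega>) n) = (\<Sum>k\<in>{k \<in> S. k ` {..<h} \<subseteq> A \<omega>}. 1)"
      unfolding r_small_def by simp
    also have "\<dots> = (\<Sum>k\<in>S. if k ` {..<h} \<subseteq> A \<omega> then 1 else 0)"
      by (rule sum.inter_filter[OF finS])
    also have "\<dots> = (\<Sum>k\<in>S. indicator (E k) \<omega>)"
      using that by (intro sum.cong) (auto simp: E_def indicator_def)
    finally show ?thesis .
  qed
  have "expectation (\<lambda>\<omega>. real (r_small b h \<delta> (A \<omega>) n)) = expectation (\<lambda>\<omega>. \<Sum>k\<in>S. indicator (E k) \<omega>)"
    by (rule Bochner_Integration.integral_cong) (auto simp: count)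
  also have "\<dots> = (\<Sum>k\<in>S. expectation (indicator (E k)))"
    by (rule Bochner_Integration.integral_sum)
       (use E(1) in \<open>auto intro!: integrable_real_indicator simp: less_top[symmetric]\<close>)
  also have "\<dots> = (\<Sum>k\<in>S. prob (E k))" using E(1) by simp
  also have "\<dots> = (\<Sum>k\<in>S. incl_prob q (k ` {..<h}))" using E(2) by simp
  finally show ?thesis unfolding S_def .
qed

lemma expectation_r_small_le_regularize:
  fixes M :: "'a measure" and A :: "'a \<Rightarrow> nat set"
  assumes "1 \<le> h" and b: "\<forall>j<h. 0 < b j" and "0 < \<theta>" "0 < \<delta>" "\<delta> < 1"
    and weights: "dominated_weights q (regularize f \<theta>) c"
    and M: "prob_space M"
    and A_zero: "\<forall>\<omega>\<in>space M. 0 \<in> A \<omega>"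
    and A_indep: "prob_space.indep_events M (\<lambda>n. {\<omega> \<in> space M. n \<in> A \<omega>}) {1..}"
    and A_prob: "\<forall>n\<ge>1. measure M {\<omega> \<in> space M. n \<in> A \<omega>} = q n"
  shows "\<exists>K\<ge>0. \<forall>\<^sub>F n in sequentially. prob_space.expectation M (\<lambda>\<omega>. real (r_small b h \<delta> (A \<omega>) n))
    \<le> K * c ^ h * real n powr (- (1 - \<delta>) * \<theta>) * regularize f \<theta> n ^ h / real n"
proof -
  interpret dominated_weights q "regularize f \<theta>" c "sum b {..<h}" by (rule weights)
  obtain K where K: "0 \<le> K" "\<And>n. 0 < n \<Longrightarrow> 2 * sum b {..<h} * real n powr \<delta> \<le> real n \<Longrightarrow>
      (\<Sum>j<h. \<Sum>v\<in>{v. v \<le> n \<and> real v < real n powr \<delta>}. rep_weight_at q j v {..<h} b n)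
        \<le> K * c ^ h * regularize f \<theta> n ^ (h - 1) * regularize f \<theta> (nat \<lfloor>real n powr \<delta>\<rfloor>) / real n"
    using sum_rep_weight_at_small_powr_le[OF assms(1) b] by blast
  have "\<forall>\<^sub>F n in sequentially. 2 * real (sum b {..<h}) * real n powr \<delta> \<le> real n"
    using eventually_mult_powr_le[OF \<open>\<delta> < 1\<close>, of "2 * real (sum b {..<h})"] by (simp add: sum_nonneg)
  with eventually_gt_at_top[of 0]
  have "\<forall>\<^sub>F n in sequentially. prob_space.expectation M (\<lambda>\<omega>. real (r_small b h \<delta> (A \<omega>) n))
    \<le> K * 2 powr \<theta> * c ^ h * real n powr (- (1 - \<delta>) * \<theta>) * regularize f \<theta> n ^ h / real n"
  proof eventually_elim
    case (elim n)
    let ?F = "regularize f \<theta>"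
    have "prob_space.expectation M (\<lambda>\<omega>. real (r_small b h \<delta> (A \<omega>) n))
        = (\<Sum>k\<in>small_reps b h \<delta> n. incl_prob q (k ` {..<h}))"
      by (rule expectation_r_small[OF M A_zero A_indep A_prob b])
    also have "\<dots> \<le> K * c ^ h * ?F n ^ (h - 1) * ?F (nat \<lfloor>real n powr \<delta>\<rfloor>) / real n"
      using elim by (intro order_trans[OF sum_small_reps_le[of h b q, OF b q_nonneg] K(2)]) auto
    also have "\<dots> \<le> K * c ^ h * ?F n ^ (h - 1) * (2 powr \<theta> * real n powr (- (1 - \<delta>) * \<theta>) * ?F n) / real n"
      using K(1) c_ge_1 F_ge_1[of n] elim assms
      by (intro divide_right_mono mult_left_mono regularize_floor_powr_le) auto
    also have "\<dots> = K * 2 powr \<theta> * c ^ h * real n powr (- (1 - \<delta>) * \<theta>) * ?F n ^ h / real n"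
      using assms(1) by (simp add: power_eq_if[of "?F n" h] algebra_simps)
    finally show ?case .
  qed
  then show ?thesis using K(1) by (intro exI[of _ "K * 2 powr \<theta>"]) auto
qed

lemma expectation_r_small_le:
  fixes M :: "'a measure" and A :: "'a \<Rightarrow> nat set"
  assumes "1 \<le> h" and b: "\<forall>j<h. 0 < b j" and \<delta>: "0 < \<delta>" "\<delta> < 1"
    and f_pos: "\<forall>x\<ge>1. f x > 0" and "0 < \<theta>"
    and theta_cond: "\<exists>x0>0. \<exists>K0>0. \<forall>x y. 1 \<le> x \<longrightarrow> x0 \<le> x \<longrightarrow> x < y \<longrightarrow>
                        f x / x powr \<theta> \<le> K0 * (f y / y powr \<theta>)"
    and c: "1 \<le> c"
    and M: "prob_space M"
    and A_zero: "\<forall>\<omega>\<in>space M. 0 \<in> A \<omega>"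
    and A_indep: "prob_space.indep_events M (\<lambda>n. {\<omega> \<in> space M. n \<in> A \<omega>}) {1..}"
    and A_prob: "\<forall>n\<ge>1. measure M {\<omega> \<in> space M. n \<in> A \<omega>} = min (c * f (real n) / real n) 1"
  shows "\<exists>K. \<forall>\<^sub>F n in sequentially. prob_space.expectation M (\<lambda>\<omega>. real (r_small b h \<delta> (A \<omega>) n))
    \<le> K * c ^ h * real n powr (- (1 - \<delta>) * \<theta>) * f (real n) ^ h / real n"
proof -
  define q where "q v = min (c * f (real v) / real v) 1" for v :: nat
  have "0 \<le> q v" for v
  proof (cases "v = 0")
    case False
    then have "0 < f (real v)" using f_pos by simp
    then show ?thesis using c by (simp add: q_def)
  qed (simp add: q_def)
  then have weights: "dominated_weights q (regularize f \<theta>) c"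
    using \<open>0 < \<theta>\<close> c by (intro dominated_weights_regularize) (auto simp: q_def)
  have A_prob_q: "\<forall>n\<ge>1. measure M {\<omega> \<in> space M. n \<in> A \<omega>} = q n" using A_prob by (simp add: q_def)
  obtain K where "0 \<le> K" and K: "\<forall>\<^sub>F n in sequentially.
      prob_space.expectation M (\<lambda>\<omega>. real (r_small b h \<delta> (A \<omega>) n))
        \<le> K * c ^ h * real n powr (- (1 - \<delta>) * \<theta>) * regularize f \<theta> n ^ h / real n"
    using expectation_r_small_le_regularize[OF assms(1) b \<open>0 < \<theta>\<close> \<delta> weights M A_zero A_indep A_prob_q]
    by blast
  obtain C where C: "\<forall>\<^sub>F n in sequentially. regularize f \<theta> n \<le> C * f (real n)"
    using regularize_le_const_mult[OF \<open>0 < \<theta>\<close> f_pos theta_cond] by blast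
  from K C have "\<forall>\<^sub>F n in sequentially. prob_space.expectation M (\<lambda>\<omega>. real (r_small b h \<delta> (A \<omega>) n))
      \<le> K * C ^ h * c ^ h * real n powr (- (1 - \<delta>) * \<theta>) * f (real n) ^ h / real n"
  proof eventually_elim
    case (elim n)
    have "regularize f \<theta> n ^ h \<le> (C * f (real n)) ^ h"
      using elim(2) one_le_regularize[of \<theta> f n] \<open>0 < \<theta>\<close> by (intro power_mono) auto
    then have "K * c ^ h * real n powr (- (1 - \<delta>) * \<theta>) * regularize f \<theta> n ^ h / real n
        \<le> K * c ^ h * real n powr (- (1 - \<delta>) * \<theta>) * (C * f (real n)) ^ h / real n"
      using \<open>0 \<le> K\<close> c by (intro divide_right_mono mult_left_mono) auto
    with elim(1) show ?case by (simp add: power_mult_distrib mult_ac)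
  qed
  then show ?thesis by blast
qed

theorem mainTheorem8:
  fixes h :: nat and b :: "nat \<Rightarrow> nat" and f :: "real \<Rightarrow> real"
    and \<theta> c :: real and M :: "'a measure" and A :: "'a \<Rightarrow> nat set"
  assumes h: "h \<ge> 2"
    and b_pos: "\<forall>j<h. b j > 0"
    and b_gcd: "Gcd (b ` {..<h}) = 1"
    and f_pos: "\<forall>x\<ge>1. f x > 0"
    and f_locint: "\<forall>x\<ge>1. f integrable_on {1..x}"
    and f_bigO: "f \<in> O(\<lambda>x. x)"
    and f_int: "(\<lambda>x. integral {1..x} (\<lambda>t. f t / t)) \<in> \<Theta>(f)"
    and theta_pos: "\<theta> > 0"
    and theta_cond: "\<exists>x0>0. \<exists>K0>0. \<forall>x y. 1 \<le> x \<longrightarrow> x0 \<le> x \<longrightarrow> x < y \<longrightarrow>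
                        f x / x powr \<theta> \<le> K0 * (f y / y powr \<theta>)"
    and c: "c \<ge> 1"
    and M: "prob_space M"
    and A_zero: "\<forall>\<omega>\<in>space M. 0 \<in> A \<omega>"
    and A_indep: "prob_space.indep_events M (\<lambda>n. {\<omega> \<in> space M. n \<in> A \<omega>}) {1..}"
    and A_prob: "\<forall>n\<ge>1. measure M {\<omega> \<in> space M. n \<in> A \<omega>} = min (c * f (real n) / real n) 1"
  shows "\<forall>\<delta>. 0 < \<delta> \<and> \<delta> < 1 \<longrightarrow>
           (\<exists>K. \<forall>\<^sub>F n in sequentially.
              prob_space.expectation M (\<lambda>\<omega>. real (r_small b h \<delta> (A \<omega>) n))
                \<le> K * c ^ h * real n powr (- (1 - \<delta>) * \<theta>) * f (real n) ^ h / real n)"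
proof (intro allI impI)
  fix \<delta> :: real assume "0 < \<delta> \<and> \<delta> < 1"
  with h show "\<exists>K. \<forall>\<^sub>F n in sequentially. prob_space.expectation M (\<lambda>\<omega>. real (r_small b h \<delta> (A \<omega>) n))
      \<le> K * c ^ h * real n powr (- (1 - \<delta>) * \<theta>) * f (real n) ^ h / real n"
    using expectation_r_small_le[OF _ b_pos _ _ f_pos theta_pos theta_cond c M A_zero A_indep A_prob]
    by simp
qed

end
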